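(* Let $X$ be a finite quandle with connected components $C_1,\dots,C_k$. There exists $N$ (depending on $X$) such that the following holds. Let $s=(x_1,\dots,x_n)\in X^n$ with $\langle x_1,\dots,x_n\rangle=X$, let $D_j=\{1\le i\le n:x_i\in C_j\}$ and $n_j=|D_j|$, and suppose $n_1,\dots,n_k\ge N$. Then the image in $S_n$ of the stabilizer of $s$ in $B_n$ equals $S_{n_1}\times\dots\times S_{n_k}$.
   Context: A quandle is a set $X$ with an operation $x^y$ such that $x\mapsto x^y$ is bijective for each $y$, $(z^x)^y=(z^y)^{x^y}$ and $x^x=x$; its connected components are the classes of the smallest equivalence relation with $x\sim x^y$; $\langle x_1,\dots,x_n\rangle=X$ means no proper subset closed under the operation contains all $x_i$. $B_n$ acts on $X^n$ from the right by $(\dots,x_i,x_{i+1},\dots)^{\sigma_i}=(\dots,x_{i+1},x_i^{x_{i+1}},\dots)$, and $B_n\to S_n$ sends $\sigma_i\mapsto(i\ i+1)$. $S_{n_1}\times\dots\times S_{n_k}$ is identified with $\{\sigma\in S_n:\sigma(D_j)=D_j\ \forall j\}$. *)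

theory Defs
  imports "HOL-Combinatorics.Combinatorics"
begin

text \<open>A quandle on the carrier X with operation op, where op x y stands for x^y.\<close>
definition quandle :: "'a set \<Rightarrow> ('a \<Rightarrow> 'a \<Rightarrow> 'a) \<Rightarrow> bool" where
  "quandle X op \<longleftrightarrow>
     (\<forall>x\<in>X. \<forall>y\<in>X. op x y \<in> X) \<and>
     (\<forall>y\<in>X. bij_betw (\<lambda>x. op x y) X X) \<and>
     (\<forall>x\<in>X. \<forall>y\<in>X. \<forall>z\<in>X. op (op z x) y = op (op z y) (op x y)) \<and>
     (\<forall>x\<in>X. op x x = x)"

definition qstep :: "'a set \<Rightarrow> ('a \<Rightarrow> 'a \<Rightarrow> 'a) \<Rightarrow> 'a rel" where
  "qstep X op = {(x, op x y) | x y. x \<in> X \<and> y \<in> X}"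

definition qcomponents :: "'a set \<Rightarrow> ('a \<Rightarrow> 'a \<Rightarrow> 'a) \<Rightarrow> 'a set set" where
  "qcomponents X op = X // ((qstep X op \<union> (qstep X op)\<inverse>)\<^sup>*)"

definition qgenerates :: "'a set \<Rightarrow> ('a \<Rightarrow> 'a \<Rightarrow> 'a) \<Rightarrow> 'a list \<Rightarrow> bool" where
  "qgenerates X op xs \<longleftrightarrow> set xs \<subseteq> X \<and>
     (\<forall>Y. Y \<subseteq> X \<and> set xs \<subseteq> Y \<and> (\<forall>a\<in>Y. \<forall>b\<in>Y. op a b \<in> Y) \<longrightarrow> Y = X)"

definition qrinv :: "'a set \<Rightarrow> ('a \<Rightarrow> 'a \<Rightarrow> 'a) \<Rightarrow> 'a \<Rightarrow> 'a \<Rightarrow> 'a" where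
  "qrinv X op b a = inv_into X (\<lambda>z. op z a) b"

text \<open>Braid words: letters (i, True) = sigma_i, (i, False) = sigma_i inverse, 0-based,
  acting on the positions i, i+1 of a tuple (a list).\<close>
type_synonym bletter = "nat \<times> bool"

definition bgen_act :: "'a set \<Rightarrow> ('a \<Rightarrow> 'a \<Rightarrow> 'a) \<Rightarrow> 'a list \<Rightarrow> bletter \<Rightarrow> 'a list" where
  "bgen_act X op s g = (case g of (i, e) \<Rightarrow>
     (if e then s[i := s ! (i+1), i+1 := op (s ! i) (s ! (i+1))]
      else s[i := qrinv X op (s ! (i+1)) (s ! i), i+1 := s ! i]))"

fun bword_act :: "'a set \<Rightarrow> ('a \<Rightarrow> 'a \<Rightarrow> 'a) \<Rightarrow> 'a list \<Rightarrow> bletter list \<Rightarrow> 'a list" where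
  "bword_act X op s [] = s"
| "bword_act X op s (g # w) = bword_act X op (bgen_act X op s g) w"

definition valid_bword :: "nat \<Rightarrow> bletter list \<Rightarrow> bool" where
  "valid_bword n w \<longleftrightarrow> (\<forall>g\<in>set w. fst g + 1 < n)"

fun bword_perm :: "bletter list \<Rightarrow> nat \<Rightarrow> nat" where
  "bword_perm [] = id"
| "bword_perm (g # w) = transpose (fst g) (fst g + 1) \<circ> bword_perm w"

definition stab_image :: "'a set \<Rightarrow> ('a \<Rightarrow> 'a \<Rightarrow> 'a) \<Rightarrow> 'a list \<Rightarrow> (nat \<Rightarrow> nat) set" where
  "stab_image X op s = {bword_perm w | w. valid_bword (length s) w \<and> bword_act X op s w = s}"

definition posin :: "'a list \<Rightarrow> 'a set \<Rightarrow> nat set" where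
  "posin s C = {i. i < length s \<and> s ! i \<in> C}"

end

theory Submission
  imports Defs
begin

text \<open>
  Attach to every entry of a tuple the position it started at; after a braid word w the labels
  record the permutation of w. Let K > 0 be a common period of all right translations x \<mapsto> x^y.
  Passing an entry through K equal entries y applies the identity, so such a block commutes with
  everything, and it is conjugated into a block of y^d by sliding any other entry d through it.
  Since the entries generate X, translations by entries connect each component, hence with enough
  entries in every component one reaches a tuple containing a block of every element of X.
  Now two equal entries at labels i and j can be interchanged, which puts the transposition (i j)
  into the image of the stabilizer; and moving a block of y across an entry b turns it into b^y,
  a value that already occurs at some other label. Following paths inside a component links all
  labels whose entries lie in that component by such transpositions, and these generate the
  product of symmetric groups. Conversely the braid action keeps every entry in its component.
\<close>

section \<open>Permutations and braid words\<close>

lemma pigeonhole_count_list: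
  assumes "finite C" "C \<noteq> {}" "card C * m \<le> length (filter (\<lambda>x. x \<in> C) xs)"
  shows "\<exists>y\<in>C. m \<le> count_list xs y"
proof (rule ccontr)
  assume few: "\<not> ?thesis"
  define V where "V = filter (\<lambda>x. x \<in> C) xs"
  have "count_list V y \<le> count_list xs y" for y
    unfolding V_def by (induction xs) auto
  then have "(\<Sum>y\<in>C. count_list V y) < (\<Sum>y\<in>C. m)"
    using few assms(1,2) by (intro sum_strict_mono) (auto simp: not_le intro: le_less_trans)
  moreover have "(\<Sum>y\<in>C. count_list V y) = length V"
    using assms(1) by (intro sum_count_set) (auto simp: V_def)
  ultimately show False
    using assms(3) by (simp add: V_def mult.commute)
qed

lemma permutes_in_transposition_closure:
  fixes G :: "('i \<Rightarrow> 'i) set" and c :: "'i \<Rightarrow> 'b"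
  assumes "finite S" "p permutes S" "\<forall>k\<in>S. c (p k) = c k"
    and id: "id \<in> G" and comp: "\<And>f g. f \<in> G \<Longrightarrow> g \<in> G \<Longrightarrow> f \<circ> g \<in> G"
    and transp: "\<And>i j. i \<in> S \<Longrightarrow> j \<in> S \<Longrightarrow> i \<noteq> j \<Longrightarrow> c i = c j \<Longrightarrow> transpose i j \<in> G"
  shows "p \<in> G"
proof -
  have "p \<in> G" if "T \<subseteq> S" "p permutes T" "\<forall>k\<in>T. c (p k) = c k" for T p
    using finite_subset[OF that(1) assms(1)] that
  proof (induction T arbitrary: p rule: finite_induct)
    case empty
    then show ?case using id by (simp add: permutes_empty id_def)
  next
    case (insert a T)
    define q where "q = transpose a (p a) \<circ> p"
    have q: "q permutes T"
      unfolding q_def using insert.prems(2) by (rule permutes_insert_lemma)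
    have pa: "p a \<in> insert a T"
      using permutes_in_image[OF insert.prems(2)] by simp
    have "c (q k) = c k" if "k \<in> T" for k
    proof (cases "p k = a")
      case True
      then show ?thesis using insert.prems(3) that by (fastforce simp: q_def)
    next
      case False
      have "p k \<noteq> p a"
        using that insert.hyps(2) permutes_inj[OF insert.prems(2)] by (metis injD)
      then show ?thesis using False insert that by (simp add: q_def)
    qed
    then have "q \<in> G"
      using insert q by auto
    moreover have "transpose a (p a) \<in> G"
      using insert pa by (cases "p a = a") (auto intro: transp)
    moreover have "p = transpose a (p a) \<circ> q"
      by (simp add: q_def fun_eq_iff)
    ultimately show ?case using comp by metis
  qed
  then show ?thesis using assms(2,3) by blast
qed

lemma split_at_pair: "i + 1 < length T \<Longrightarrow> \<exists>A a b C. T = A @ a # b # C \<and> length A = i"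
  by (intro exI[of _ "take i T"] exI[of _ "T ! i"] exI[of _ "T ! (i + 1)"] exI[of _ "drop (i + 2) T"])
     (simp add: id_take_nth_drop Cons_nth_drop_Suc)

lemma bword_perm_append: "bword_perm (w1 @ w2) = bword_perm w1 \<circ> bword_perm w2"
  by (induction w1) (auto simp: comp_assoc)

lemma bword_act_append: "bword_act X op s (w1 @ w2) = bword_act X op (bword_act X op s w1) w2"
  by (induction w1 arbitrary: s) auto

lemma valid_bword_append: "valid_bword n (w1 @ w2) \<longleftrightarrow> valid_bword n w1 \<and> valid_bword n w2"
  unfolding valid_bword_def by auto

lemma bword_perm_less: "valid_bword n w \<Longrightarrow> k < n \<Longrightarrow> bword_perm w k < n"
  by (induction w arbitrary: k) (auto simp: valid_bword_def transpose_def)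

lemma bword_perm_permutes: "valid_bword n w \<Longrightarrow> bword_perm w permutes {0..<n}"
proof (induction w)
  case (Cons g w)
  then have "transpose (fst g) (fst g + 1) permutes {0..<n}" "bword_perm w permutes {0..<n}"
    unfolding valid_bword_def by (auto intro: permutes_swap_id)
  from permutes_compose[OF this(2,1)] show ?case
    by (simp only: bword_perm.simps)
qed (simp add: permutes_id[unfolded id_def])

lemma stab_image_comp:
  assumes "p \<in> stab_image X op s" "q \<in> stab_image X op s"
  shows "p \<circ> q \<in> stab_image X op s"
proof -
  obtain w1 w2 where "p = bword_perm w1" "valid_bword (length s) w1" "bword_act X op s w1 = s"
    and "q = bword_perm w2" "valid_bword (length s) w2" "bword_act X op s w2 = s"
    using assms unfolding stab_image_def by blast
  then show ?thesis
    unfolding stab_image_def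
    by (intro CollectI exI[of _ "w1 @ w2"]) (simp add: bword_perm_append valid_bword_append bword_act_append)
qed

lemma id_in_stab_image: "id \<in> stab_image X op s"
  unfolding stab_image_def valid_bword_def by (auto intro!: exI[of _ "[]"])

section \<open>Period and components of a finite quandle\<close>

locale finite_quandle =
  fixes X :: "'a set" and op :: "'a \<Rightarrow> 'a \<Rightarrow> 'a"
  assumes finite_carrier: "finite X" and quandle: "quandle X op"
begin

lemma op_closed: "x \<in> X \<Longrightarrow> y \<in> X \<Longrightarrow> op x y \<in> X"
  using quandle unfolding quandle_def by blast

lemma right_bij: "y \<in> X \<Longrightarrow> bij_betw (\<lambda>x. op x y) X X"
  using quandle unfolding quandle_def by blast

lemma right_distrib: "x \<in> X \<Longrightarrow> y \<in> X \<Longrightarrow> z \<in> X \<Longrightarrow> op (op z x) y = op (op z y) (op x y)"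
  using quandle unfolding quandle_def by blast

lemma op_idem: "x \<in> X \<Longrightarrow> op x x = x"
  using quandle unfolding quandle_def by blast

lemma qrinv_closed: "a \<in> X \<Longrightarrow> b \<in> X \<Longrightarrow> qrinv X op b a \<in> X"
  unfolding qrinv_def using right_bij[of a] by (simp add: bij_betw_def inv_into_into)

lemma op_qrinv: "a \<in> X \<Longrightarrow> b \<in> X \<Longrightarrow> op (qrinv X op b a) a = b"
  unfolding qrinv_def using right_bij[of a] f_inv_into_f[of b "\<lambda>z. op z a" X] by (simp add: bij_betw_def)

lemma qrinv_op: "a \<in> X \<Longrightarrow> z \<in> X \<Longrightarrow> qrinv X op (op z a) a = z"
  unfolding qrinv_def using right_bij[of a] inv_into_f_f[of "\<lambda>z. op z a" X z] by (simp add: bij_betw_def)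

abbreviation rpow :: "'a \<Rightarrow> nat \<Rightarrow> 'a \<Rightarrow> 'a" where
  "rpow y k \<equiv> (\<lambda>x. op x y) ^^ k"

lemma rpow_closed: "x \<in> X \<Longrightarrow> y \<in> X \<Longrightarrow> rpow y k x \<in> X"
  by (induction k) (auto intro: op_closed)

lemma ex_rpow_period: "y \<in> X \<Longrightarrow> \<exists>n>0. \<forall>x\<in>X. rpow y n x = x"
proof -
  assume y: "y \<in> X"
  define p where "p x = (if x \<in> X then op x y else x)" for x
  have "p permutes X"
    using right_bij[OF y] by (intro bij_imp_permutes) (auto simp: p_def cong: bij_betw_cong)
  then obtain n where n: "p ^^ n = id" "n > 0"
    using finite_carrier permutation_permutes permutation_is_nilpotent by metis
  have "x \<in> X \<Longrightarrow> (p ^^ k) x = rpow y k x" for x k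
    by (induction k) (auto simp: p_def rpow_closed y)
  then show ?thesis using n by (metis id_apply)
qed

lemma ex_common_period: "\<exists>K>0. \<forall>y\<in>X. \<forall>x\<in>X. rpow y K x = x"
proof -
  define n where "n y = (SOME n. n > 0 \<and> (\<forall>x\<in>X. rpow y n x = x))" for y
  have n: "n y > 0" "\<forall>x\<in>X. rpow y (n y) x = x" if "y \<in> X" for y
    using someI_ex[OF ex_rpow_period[OF that]] unfolding n_def by auto
  define K where "K = (\<Prod>y\<in>X. n y)"
  have "rpow y K x = x" if y: "y \<in> X" and x: "x \<in> X" for x y
  proof -
    obtain m where "K = n y * m"
      using dvd_prodI[OF finite_carrier y, of n] unfolding K_def by (elim dvdE)
    then have "rpow y K = (rpow y (n y)) ^^ m"
      by (simp add: funpow_mult)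
    moreover have "(rpow y (n y) ^^ m) x = x"
      using x y by (induction m) (simp_all add: n)
    ultimately show ?thesis by simp
  qed
  moreover have "K > 0"
    unfolding K_def using n(1) by (simp add: prod_pos)
  ultimately show ?thesis by blast
qed

definition period :: nat where
  "period = (SOME K. K > 0 \<and> (\<forall>y\<in>X. \<forall>x\<in>X. rpow y K x = x))"

lemma period_pos: "period > 0"
  and rpow_period: "y \<in> X \<Longrightarrow> x \<in> X \<Longrightarrow> rpow y period x = x"
  using someI_ex[OF ex_common_period] unfolding period_def by auto

lemma op_rpow_period_pred: "x \<in> X \<Longrightarrow> y \<in> X \<Longrightarrow> op (rpow y (period - 1) x) y = x"
  using rpow_period[of y x] period_pos by (metis Suc_pred' funpow.simps(2) comp_apply)

lemma rpow_period_pred: "x \<in> X \<Longrightarrow> y \<in> X \<Longrightarrow> rpow y (period - 1) (op x y) = x"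
  using rpow_period period_pos funpow_Suc_right[of "period - 1" "\<lambda>x. op x y"]
  by (metis Suc_pred' comp_apply)

definition comp_rel :: "'a rel" where
  "comp_rel = (qstep X op \<union> (qstep X op)\<inverse>)\<^sup>*"

lemma equiv_comp_rel: "equiv UNIV comp_rel"
  unfolding comp_rel_def
  by (intro equivI refl_rtrancl trans_rtrancl sym_rtrancl sym_Un_converse) simp

lemma comp_rel_refl [simp]: "(x, x) \<in> comp_rel"
  unfolding comp_rel_def by simp

lemma comp_rel_sym: "(x, z) \<in> comp_rel \<Longrightarrow> (z, x) \<in> comp_rel"
  using equiv_comp_rel by (auto elim: equivE symE)

lemma comp_rel_trans: "(x, y) \<in> comp_rel \<Longrightarrow> (y, z) \<in> comp_rel \<Longrightarrow> (x, z) \<in> comp_rel"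
  unfolding comp_rel_def by (rule rtrancl_trans)

lemma comp_rel_op: "x \<in> X \<Longrightarrow> y \<in> X \<Longrightarrow> (x, op x y) \<in> comp_rel"
  unfolding comp_rel_def qstep_def by blast

lemma comp_rel_qrinv: "x \<in> X \<Longrightarrow> y \<in> X \<Longrightarrow> (x, qrinv X op x y) \<in> comp_rel"
proof -
  assume xy: "x \<in> X" "y \<in> X"
  then have "(qrinv X op x y, x) \<in> comp_rel"
    using comp_rel_op[OF qrinv_closed[OF xy(2,1)] xy(2)] by (simp add: op_qrinv)
  then show ?thesis
    by (rule comp_rel_sym)
qed

lemma comp_rel_closed: "(x, z) \<in> comp_rel \<Longrightarrow> x \<in> X \<Longrightarrow> z \<in> X"
  unfolding comp_rel_def by (induction rule: rtrancl_induct) (auto simp: qstep_def op_closed)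

lemma comp_rel_iff_Image_eq: "(x, z) \<in> comp_rel \<longleftrightarrow> comp_rel `` {x} = comp_rel `` {z}"
  using equiv_class_eq_iff[OF equiv_comp_rel] by simp

lemma qcomponents_eq: "qcomponents X op = X // comp_rel"
  unfolding qcomponents_def comp_rel_def ..

lemma comp_rel_Image_in_qcomponents: "x \<in> X \<Longrightarrow> comp_rel `` {x} \<in> qcomponents X op"
  unfolding qcomponents_eq by (rule quotientI)

lemma qcomponentE:
  assumes "C \<in> qcomponents X op"
  obtains c where "c \<in> X" "C = comp_rel `` {c}"
  using assms unfolding qcomponents_eq quotient_def by blast

lemma qcomponent_subset: "C \<in> qcomponents X op \<Longrightarrow> C \<subseteq> X"
  by (auto elim: qcomponentE dest: comp_rel_closed)

lemma qcomponent_op_iff: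
  assumes "C \<in> qcomponents X op" "x \<in> X" "y \<in> X"
  shows "op x y \<in> C \<longleftrightarrow> x \<in> C" and "qrinv X op x y \<in> C \<longleftrightarrow> x \<in> C"
proof -
  obtain c where C: "C = comp_rel `` {c}"
    using assms(1) by (rule qcomponentE)
  show "op x y \<in> C \<longleftrightarrow> x \<in> C" and "qrinv X op x y \<in> C \<longleftrightarrow> x \<in> C"
    unfolding C using comp_rel_op[OF assms(2,3)] comp_rel_qrinv[OF assms(2,3)]
    by (simp_all add: comp_rel_iff_Image_eq)
qed

definition generates :: "'a set \<Rightarrow> bool" where
  "generates S \<longleftrightarrow> (\<forall>Y. Y \<subseteq> X \<and> S \<subseteq> Y \<and> (\<forall>a\<in>Y. \<forall>b\<in>Y. op a b \<in> Y) \<longrightarrow> Y = X)"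

definition translation_rel :: "'a set \<Rightarrow> 'a rel" where
  "translation_rel S = {(u, op u d) | u d. u \<in> X \<and> d \<in> S}"

lemma rpow_in_rtrancl:
  "\<forall>u\<in>X. (u, op u c) \<in> R\<^sup>* \<Longrightarrow> c \<in> X \<Longrightarrow> u \<in> X \<Longrightarrow> (u, rpow c k u) \<in> R\<^sup>*"
  by (induction k) (auto intro: rtrancl_trans rpow_closed)

text \<open>The elements c such that every pair (u, op u c) is connected by translations by S form a
  subquandle containing S; the inverse of translation by d is rpow d (period - 1).\<close>

lemma generates_translation_rel:
  assumes "S \<subseteq> X" "generates S" "c \<in> X" "u \<in> X"
  shows "(u, op u c) \<in> (translation_rel S)\<^sup>*"
proof -
  let ?R = "(translation_rel S)\<^sup>*"
  define Z where "Z = {c \<in> X. \<forall>u\<in>X. (u, op u c) \<in> ?R}"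
  have "op c d \<in> Z" if "c \<in> Z" "d \<in> Z" for c d
  proof -
    have c: "c \<in> X" "\<forall>u\<in>X. (u, op u c) \<in> ?R" and d: "d \<in> X" "\<forall>u\<in>X. (u, op u d) \<in> ?R"
      using that unfolding Z_def by auto
    have "(u, op u (op c d)) \<in> ?R" if u: "u \<in> X" for u
    proof -
      define u' where "u' = rpow d (period - 1) u"
      have u': "u' \<in> X" and u'_d: "op u' d = u"
        using u d(1) rpow_closed op_rpow_period_pred unfolding u'_def by simp_all
      have "(u, u') \<in> ?R"
        unfolding u'_def by (rule rpow_in_rtrancl[OF d(2) d(1) u])
      also have "(u', op u' c) \<in> ?R"
        using c(2) u' by blast
      also have "(op u' c, op (op u' c) d) \<in> ?R"
        using d(2) op_closed[OF u' c(1)] by blast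
      also have "op (op u' c) d = op u (op c d)"
        using right_distrib[OF c(1) d(1) u'] u'_d by simp
      finally show ?thesis .
    qed
    then show ?thesis
      using c(1) d(1) op_closed unfolding Z_def by blast
  qed
  moreover have "S \<subseteq> Z"
  proof
    fix c assume "c \<in> S"
    then have "(u, op u c) \<in> translation_rel S" if "u \<in> X" for u
      using that unfolding translation_rel_def by blast
    then show "c \<in> Z"
      using \<open>c \<in> S\<close> assms(1) unfolding Z_def by blast
  qed
  moreover have "Z \<subseteq> X"
    unfolding Z_def by blast
  ultimately have "Z = X"
    using assms(2) unfolding generates_def by blast
  then show ?thesis
    using assms(3,4) unfolding Z_def by blast
qed

lemma comp_rel_subset_translation_rel:
  assumes "S \<subseteq> X" "generates S"
  shows "comp_rel \<subseteq> (translation_rel S)\<^sup>*"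
proof (rule subrelI)
  fix x z assume "(x, z) \<in> comp_rel"
  then show "(x, z) \<in> (translation_rel S)\<^sup>*"
    unfolding comp_rel_def
  proof (induction rule: rtrancl_induct)
    case (step z z')
    have "(z, z') \<in> (translation_rel S)\<^sup>*"
      using step(2)
    proof
      assume "(z, z') \<in> qstep X op"
      then obtain y where "z \<in> X" "y \<in> X" "z' = op z y"
        unfolding qstep_def by blast
      then show ?thesis
        using generates_translation_rel[OF assms] by simp
    next
      assume "(z, z') \<in> (qstep X op)\<inverse>"
      then obtain y where y: "z' \<in> X" "y \<in> X" "z = op z' y"
        unfolding qstep_def by blast
      have "\<forall>u\<in>X. (u, op u y) \<in> (translation_rel S)\<^sup>*"
        using generates_translation_rel[OF assms y(2)] by blast
      then have "(z, rpow y (period - 1) z) \<in> (translation_rel S)\<^sup>*"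
        using y op_closed by (intro rpow_in_rtrancl) simp_all
      then show ?thesis
        using rpow_period_pred y by simp
    qed
    with step(3) show ?case by (rule rtrancl_trans)
  qed simp
qed

section \<open>Labelled tuples\<close>

text \<open>An entry (k, x) is a value x together with the position k it occupied in the initial tuple;
  lstep acts on values exactly as bgen_act does and carries the labels along.\<close>

definition lstep :: "(nat \<times> 'a) list \<Rightarrow> bletter \<Rightarrow> (nat \<times> 'a) list" where
  "lstep T g = (case g of (i, e) \<Rightarrow>
     (if e then T[i := T ! (i+1), i+1 := (fst (T ! i), op (snd (T ! i)) (snd (T ! (i+1))))]
      else T[i := (fst (T ! (i+1)), qrinv X op (snd (T ! (i+1))) (snd (T ! i))), i+1 := T ! i]))"

definition lact :: "(nat \<times> 'a) list \<Rightarrow> bletter list \<Rightarrow> (nat \<times> 'a) list" where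
  "lact T w = foldl lstep T w"

lemma lact_Nil [simp]: "lact T [] = T"
  and lact_Cons [simp]: "lact T (g # w) = lact (lstep T g) w"
  and lact_append: "lact T (w1 @ w2) = lact (lact T w1) w2"
  by (simp_all add: lact_def)

lemma lstep_sigma [simp]:
  "lstep (A @ a # b # C) (length A, True) = A @ b # (fst a, op (snd a) (snd b)) # C"
  by (simp add: lstep_def list_update_append nth_append)

lemma lstep_sigma_inv [simp]:
  "lstep (A @ a # b # C) (length A, False) = A @ (fst b, qrinv X op (snd b) (snd a)) # a # C"
  by (simp add: lstep_def list_update_append nth_append)

lemma length_lstep [simp]: "length (lstep T g) = length T"
  by (simp add: lstep_def split: prod.split)

lemma length_lact [simp]: "length (lact T w) = length T"
  by (induction w arbitrary: T) simp_all

lemma lact_induct: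
  assumes "valid_bword (length T) w" "P T"
    and step: "\<And>A a b C e. P (A @ a # b # C) \<Longrightarrow> P (lstep (A @ a # b # C) (length A, e))"
  shows "P (lact T w)"
  using assms(1,2)
proof (induction w arbitrary: T)
  case (Cons g w)
  obtain i e where g: "g = (i, e)" by fastforce
  obtain A a b C where T: "T = A @ a # b # C" and i: "length A = i"
    using Cons.prems(1) split_at_pair[of i T] g unfolding valid_bword_def by auto
  have "P (lstep T g)"
    using step[of A a b C e] Cons.prems(2) unfolding T g i[symmetric] by simp
  then show ?case
    using Cons unfolding valid_bword_def by simp
qed simp

definition reachable :: "(nat \<times> 'a) list \<Rightarrow> (nat \<times> 'a) list \<Rightarrow> bool" where
  "reachable T T' \<longleftrightarrow> (\<exists>w. valid_bword (length T) w \<and> lact T w = T')"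

lemma reachable_refl [simp]: "reachable T T"
  unfolding reachable_def valid_bword_def by (intro exI[of _ "[]"]) simp

lemma reachable_trans [trans]: "reachable T1 T2 \<Longrightarrow> reachable T2 T3 \<Longrightarrow> reachable T1 T3"
  unfolding reachable_def valid_bword_def by (metis Un_iff length_lact set_append lact_append)

lemma reachable_step: "i + 1 < length T \<Longrightarrow> reachable T (lstep T (i, e))"
  unfolding reachable_def valid_bword_def by (intro exI[of _ "[(i, e)]"]) simp

lemma reachable_sigma: "reachable (A @ a # b # C) (A @ b # (fst a, op (snd a) (snd b)) # C)"
  using reachable_step[of "length A" "A @ a # b # C" True] by simp

lemma reachable_sigma_inv: "reachable (A @ a # b # C) (A @ (fst b, qrinv X op (snd b) (snd a)) # a # C)"
  using reachable_step[of "length A" "A @ a # b # C" False] by simp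

lemma reachable_induct [consumes 1, case_names init step]:
  assumes "reachable T T'" "P T"
    and "\<And>A a b C e. P (A @ a # b # C) \<Longrightarrow> P (lstep (A @ a # b # C) (length A, e))"
  shows "P T'"
  using assms lact_induct unfolding reachable_def by blast

lemma lstep_in_carrier:
  "snd ` set (A @ a # b # C) \<subseteq> X \<Longrightarrow> snd ` set (lstep (A @ a # b # C) (length A, e)) \<subseteq> X"
  by (cases e) (auto simp: op_closed qrinv_closed)

lemma reachable_in_carrier: "reachable T T' \<Longrightarrow> snd ` set T \<subseteq> X \<Longrightarrow> snd ` set T' \<subseteq> X"
  by (induction rule: reachable_induct) (simp_all add: lstep_in_carrier)

lemma lstep_lstep_inv:
  "snd ` set (A @ a # b # C) \<subseteq> X \<Longrightarrow>
   lstep (lstep (A @ a # b # C) (length A, e)) (length A, \<not> e) = A @ a # b # C"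
  by (cases e) (auto simp: qrinv_op op_qrinv op_closed qrinv_closed)

lemma reachable_sym: "reachable T T' \<Longrightarrow> snd ` set T \<subseteq> X \<Longrightarrow> reachable T' T"
proof -
  assume "reachable T T'" "snd ` set T \<subseteq> X"
  then have "reachable T' T \<and> snd ` set T' \<subseteq> X"
  proof (induction rule: reachable_induct)
    case (step A a b C e)
    let ?U = "lstep (A @ a # b # C) (length A, e)"
    from step have to_T: "reachable (A @ a # b # C) T" and carrier: "snd ` set (A @ a # b # C) \<subseteq> X"
      by simp_all
    have "reachable ?U (lstep ?U (length A, \<not> e))"
      by (rule reachable_step) simp
    then have "reachable ?U (A @ a # b # C)"
      using lstep_lstep_inv[OF carrier] by simp
    then show ?case
      using reachable_trans[OF _ to_T] lstep_in_carrier[OF carrier] by simp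
  qed simp
  then show ?thesis ..
qed

lemma reachable_entry_invariant:
  assumes "reachable T T'" "\<forall>(k, x)\<in>set T. P k x \<and> x \<in> X"
    and closed: "\<And>k x y. x \<in> X \<Longrightarrow> y \<in> X \<Longrightarrow> P k x \<Longrightarrow> P k (op x y) \<and> P k (qrinv X op x y)"
  shows "\<forall>(k, x)\<in>set T'. P k x \<and> x \<in> X"
  using assms(1,2)
proof (induction rule: reachable_induct)
  case (step A a b C e)
  then show ?case
    using closed[of "snd a" "snd b" "fst a"] closed[of "snd b" "snd a" "fst b"]
    by (cases e) (auto simp: op_closed qrinv_closed split: prod.splits)
qed

lemma reachable_mset_labels: "reachable T T' \<Longrightarrow> mset (map fst T') = mset (map fst T)"
proof (induction rule: reachable_induct)
  case (step A a b C e)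
  then show ?case by (cases e) (auto simp: add_mset_commute)
qed simp

definition count_in :: "'a set \<Rightarrow> (nat \<times> 'a) list \<Rightarrow> nat" where
  "count_in C T = length (filter (\<lambda>x. x \<in> C) (map snd T))"

lemma count_in_append [simp]: "count_in C (A @ B) = count_in C A + count_in C B"
  by (simp add: count_in_def)

lemma count_in_le_length: "count_in C T \<le> length T"
  unfolding count_in_def by (metis length_filter_le length_map)

lemma reachable_count_in:
  assumes "reachable T T'" "snd ` set T \<subseteq> X" "C \<in> qcomponents X op"
  shows "count_in C T' = count_in C T"
proof -
  have "count_in C T' = count_in C T \<and> snd ` set T' \<subseteq> X"
    using assms(1,2)
  proof (induction rule: reachable_induct)
    case (step A a b D e)
    then show ?case
      using qcomponent_op_iff[OF assms(3), of "snd a" "snd b"] qcomponent_op_iff[OF assms(3), of "snd b" "snd a"]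
      by (cases e) (auto simp: op_closed qrinv_closed count_in_def)
  qed simp
  then show ?thesis ..
qed

lemma rpow_closed_under:
  "\<forall>u\<in>Y. \<forall>v\<in>Y. op u v \<in> Y \<Longrightarrow> x \<in> Y \<Longrightarrow> y \<in> Y \<Longrightarrow> rpow y k x \<in> Y"
  by (induction k) auto

lemma generates_if_generated:
  assumes "\<And>Y. \<forall>u\<in>Y. \<forall>v\<in>Y. op u v \<in> Y \<Longrightarrow> S' \<subseteq> Y \<Longrightarrow> S \<subseteq> Y" "generates S"
  shows "generates S'"
  unfolding generates_def
proof (intro allI impI)
  fix Y assume Y: "Y \<subseteq> X \<and> S' \<subseteq> Y \<and> (\<forall>a\<in>Y. \<forall>b\<in>Y. op a b \<in> Y)"
  then have "S \<subseteq> Y"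
    using assms(1) by blast
  with Y show "Y = X"
    using assms(2) unfolding generates_def by blast
qed

lemma reachable_generates:
  assumes "reachable T T'" "snd ` set T \<subseteq> X" "generates (snd ` set T)"
  shows "generates (snd ` set T')"
proof -
  have "generates (snd ` set T') \<and> snd ` set T' \<subseteq> X"
    using assms(1)
  proof (induction rule: reachable_induct)
    case init
    then show ?case using assms(2,3) by simp
  next
    case (step A a b C e)
    then have a: "snd a \<in> X" and b: "snd b \<in> X" and gen: "generates (snd ` set (A @ a # b # C))"
      by simp_all
    let ?U = "lstep (A @ a # b # C) (length A, e)"
    have "snd ` set (A @ a # b # C) \<subseteq> Y"
      if Y: "\<forall>u\<in>Y. \<forall>v\<in>Y. op u v \<in> Y" "snd ` set ?U \<subseteq> Y" for Y
    proof (cases e)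
      case True
      have "rpow (snd b) (period - 1) (op (snd a) (snd b)) \<in> Y"
        using Y True by (intro rpow_closed_under) auto
      then show ?thesis
        using Y True rpow_period_pred[OF a b] by auto
    next
      case False
      have "op (qrinv X op (snd b) (snd a)) (snd a) \<in> Y"
        using Y False by auto
      then show ?thesis
        using Y False op_qrinv[OF a b] by auto
    qed
    then have "generates (snd ` set ?U)"
      using gen by (rule generates_if_generated)
    then show ?case
      using lstep_in_carrier step by simp
  qed
  then show ?thesis ..
qed

lemma map_snd_lstep:
  "i + 1 < length T \<Longrightarrow> map snd (lstep T (i, e)) = bgen_act X op (map snd T) (i, e)"
  using split_at_pair[of i T]
  by (cases e) (auto simp: bgen_act_def nth_append list_update_append)

lemma fst_lstep_nth:
  "i + 1 < length T \<Longrightarrow> m < length T \<Longrightarrow> fst (lstep T (i, e) ! m) = fst (T ! transpose i (i + 1) m)"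
  by (cases e) (auto simp: lstep_def nth_list_update transpose_def)

lemma map_snd_lact:
  "valid_bword (length T) w \<Longrightarrow> map snd (lact T w) = bword_act X op (map snd T) w"
proof (induction w arbitrary: T)
  case (Cons g w)
  then show ?case
    using map_snd_lstep[of "fst g" T "snd g"] unfolding valid_bword_def by simp
qed simp

lemma fst_lact_nth:
  "valid_bword (length T) w \<Longrightarrow> k < length T \<Longrightarrow> fst (lact T w ! k) = fst (T ! bword_perm w k)"
proof (induction w arbitrary: T)
  case (Cons g w)
  have "valid_bword (length T) w"
    using Cons.prems(1) unfolding valid_bword_def by simp
  then show ?case
    using Cons fst_lstep_nth[of "fst g" T "bword_perm w k" "snd g"] bword_perm_less
    unfolding valid_bword_def by simp
qed simp

lemma lstep_map_apfst:
  "i + 1 < length T \<Longrightarrow> lstep (map (apfst f) T) (i, e) = map (apfst f) (lstep T (i, e))"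
  using split_at_pair[of i T] by (cases e) (auto simp: lstep_def nth_append list_update_append)

lemma lact_map_apfst:
  "valid_bword (length T) w \<Longrightarrow> lact (map (apfst f) T) w = map (apfst f) (lact T w)"
proof (induction w arbitrary: T)
  case (Cons g w)
  then show ?case
    using lstep_map_apfst[of "fst g" T f "snd g"] unfolding valid_bword_def by simp
qed simp

lemma reachable_relabel: "reachable T T' \<Longrightarrow> reachable (map (apfst f) T) (map (apfst f) T')"
  unfolding reachable_def using lact_map_apfst by fastforce

lemma reachable_swap_equal:
  "snd ` set (A @ (i, x) # B @ (j, x) # C) \<subseteq> X \<Longrightarrow>
   reachable (A @ (i, x) # B @ (j, x) # C) (A @ (j, x) # B @ (i, x) # C)"
proof (induction B arbitrary: C rule: rev_induct)
  case Nil
  then show ?case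
    using reachable_sigma[of A "(i, x)" "(j, x)" C] op_idem by simp
next
  case (snoc c B)
  have x: "x \<in> X" and c: "snd c \<in> X"
    using snoc.prems by auto
  let ?c' = "(fst c, op (snd c) x)"
  have "reachable (A @ (i, x) # (B @ [c]) @ (j, x) # C) (A @ (i, x) # B @ (j, x) # ?c' # C)"
    using reachable_sigma[of "A @ (i, x) # B" c "(j, x)" C] by simp
  also have "reachable \<dots> (A @ (j, x) # B @ (i, x) # ?c' # C)"
    using snoc x c op_closed by simp
  also have "reachable \<dots> (A @ (j, x) # (B @ [c]) @ (i, x) # C)"
    using reachable_sigma_inv[of "A @ (j, x) # B" "(i, x)" ?c' C] qrinv_op[OF x c] by simp
  finally show ?case .
qed

section \<open>Blocks\<close>

text \<open>Passing an entry through a block applies rpow y period, the identity on X; so blocks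
  commute with every entry.\<close>

definition is_block :: "'a \<Rightarrow> (nat \<times> 'a) list \<Rightarrow> bool" where
  "is_block y Y \<longleftrightarrow> length Y = period \<and> (\<forall>e\<in>set Y. snd e = y)"

definition rconj :: "'a \<Rightarrow> (nat \<times> 'a) list \<Rightarrow> (nat \<times> 'a) list" where
  "rconj c Y = map (apsnd (\<lambda>x. op x c)) Y"

lemma is_block_rconj: "is_block y Y \<Longrightarrow> is_block (op y c) (rconj c Y)"
  unfolding is_block_def rconj_def by auto

lemma is_block_in_carrier: "is_block y Y \<Longrightarrow> y \<in> X \<Longrightarrow> snd ` set Y \<subseteq> X"
  unfolding is_block_def by auto

lemma is_block_nonempty: "is_block y Y \<Longrightarrow> \<exists>e Y'. Y = e # Y' \<and> snd e = y"
  using period_pos unfolding is_block_def by (cases Y) auto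

definition has_block :: "'a \<Rightarrow> (nat \<times> 'a) list \<Rightarrow> bool" where
  "has_block y T \<longleftrightarrow> (\<exists>A Y B. T = A @ Y @ B \<and> is_block y Y)"

lemma has_block_append:
  assumes "has_block y T"
  shows "has_block y (T @ T')" and "has_block y (T' @ T)"
proof -
  obtain A Y B where T: "T = A @ Y @ B" and Y: "is_block y Y"
    using assms unfolding has_block_def by blast
  show "has_block y (T @ T')"
    unfolding has_block_def
  proof (intro exI conjI)
    show "T @ T' = A @ Y @ (B @ T')" using T by simp
  qed (rule Y)
  show "has_block y (T' @ T)"
    unfolding has_block_def
  proof (intro exI conjI)
    show "T' @ T = (T' @ A) @ Y @ B" using T by simp
  qed (rule Y)
qed

lemma reachable_pass_right:
  "\<forall>e\<in>set Y. snd e = y \<Longrightarrow> reachable (A @ (k, x) # Y @ C) (A @ Y @ (k, rpow y (length Y) x) # C)"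
proof (induction Y arbitrary: A x)
  case (Cons e Y)
  have "reachable (A @ (k, x) # e # Y @ C) ((A @ [e]) @ (k, op x y) # Y @ C)"
    using reachable_sigma[of A "(k, x)" e "Y @ C"] Cons.prems by simp
  also have "reachable \<dots> ((A @ [e]) @ Y @ (k, rpow y (length Y) (op x y)) # C)"
    using Cons.prems by (intro Cons.IH) simp
  finally show ?case
    by (simp add: funpow_Suc_right del: funpow.simps)
qed simp

lemma reachable_pass_left: "reachable (A @ Y @ (j, c) # C) (A @ (j, c) # rconj c Y @ C)"
proof (induction Y arbitrary: C rule: rev_induct)
  case (snoc e Y)
  have "reachable (A @ Y @ e # (j, c) # C) (A @ Y @ (j, c) # (fst e, op (snd e) c) # C)"
    using reachable_sigma[of "A @ Y" e "(j, c)" C] by simp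
  also have "reachable \<dots> (A @ (j, c) # rconj c Y @ (fst e, op (snd e) c) # C)"
    using snoc by simp
  finally show ?case
    by (simp add: rconj_def apsnd_def map_prod_def split_def)
qed (simp add: rconj_def)

lemma reachable_block_left:
  "is_block y Y \<Longrightarrow> y \<in> X \<Longrightarrow> snd ` set B \<subseteq> X \<Longrightarrow> reachable (A @ B @ Y @ C) (A @ Y @ B @ C)"
proof (induction B arbitrary: C rule: rev_induct)
  case (snoc c B)
  have "rpow y (length Y) (snd c) = snd c"
    using snoc.prems rpow_period unfolding is_block_def by simp
  then have "reachable (A @ (B @ [c]) @ Y @ C) (A @ B @ Y @ c # C)"
    using reachable_pass_right[of Y y "A @ B" "fst c" "snd c" C] snoc.prems
    unfolding is_block_def by simp
  also have "reachable \<dots> (A @ Y @ B @ c # C)"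
    using snoc by simp
  finally show ?case by simp
qed simp

lemma reachable_block_right:
  "is_block y Y \<Longrightarrow> y \<in> X \<Longrightarrow> snd ` set (A @ B @ Y @ C) \<subseteq> X \<Longrightarrow> reachable (A @ Y @ B @ C) (A @ B @ Y @ C)"
  using reachable_block_left reachable_sym by (metis image_Un set_append le_sup_iff)

lemma reachable_block_conj:
  assumes Y: "is_block y Y" "y \<in> X" and carrier: "snd ` set (A @ Y @ D) \<subseteq> X" and d: "(j, d) \<in> set (A @ D)"
  shows "reachable (A @ Y @ D) (A @ rconj d Y @ D)"
proof -
  have "d \<in> X"
    using carrier d by force
  then have Y': "is_block (op y d) (rconj d Y)" "op y d \<in> X"
    using is_block_rconj[OF Y(1)] op_closed[OF Y(2)] by auto
  have "(j, d) \<in> set D \<or> (j, d) \<in> set A"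
    using d by auto
  then show ?thesis
  proof
    assume "(j, d) \<in> set D"
    then obtain B C where D: "D = B @ (j, d) # C"
      by (meson split_list)
    have "reachable (A @ Y @ B @ (j, d) # C) (A @ B @ Y @ (j, d) # C)"
      using carrier unfolding D by (intro reachable_block_right[OF Y]) auto
    also have "reachable \<dots> (A @ B @ (j, d) # rconj d Y @ C)"
      using reachable_pass_left[of "A @ B" Y j d C] by simp
    also have "reachable \<dots> (A @ rconj d Y @ B @ (j, d) # C)"
      using reachable_block_left[OF Y', of "B @ [(j, d)]" A C] carrier \<open>d \<in> X\<close> unfolding D by auto
    finally show ?thesis
      unfolding D .
  next
    assume "(j, d) \<in> set A"
    then obtain A1 B where A: "A = A1 @ (j, d) # B"
      by (meson split_list)
    have "reachable (A1 @ (j, d) # B @ Y @ D) (A1 @ (j, d) # Y @ B @ D)"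
      using reachable_block_left[OF Y, of B "A1 @ [(j, d)]" D] carrier unfolding A by auto
    also have "reachable \<dots> (A1 @ Y @ (j, d) # B @ D)"
      using reachable_block_left[OF Y, of "[(j, d)]" A1 "B @ D"] \<open>d \<in> X\<close> by simp
    also have "reachable \<dots> (A1 @ (j, d) # rconj d Y @ B @ D)"
      by (rule reachable_pass_left)
    also have "reachable \<dots> (A1 @ (j, d) # B @ rconj d Y @ D)"
      using reachable_block_right[OF Y', of "A1 @ [(j, d)]" B D] carrier is_block_in_carrier[OF Y']
      unfolding A by auto
    finally show ?thesis
      unfolding A by simp
  qed
qed

lemma reachable_translate_entry:
  assumes Y: "is_block y Y" "y \<in> X" and carrier: "snd ` set (A @ Y @ D) \<subseteq> X" and b: "(k, b) \<in> set (A @ D)"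
  shows "\<exists>T'. reachable (A @ Y @ D) T' \<and> (k, op b y) \<in> set T' \<and> set (A @ Y @ D) - {(k, b)} \<subseteq> set T'"
proof -
  obtain e Y' where Ye: "Y = e # Y'" "snd e = y"
    using is_block_nonempty[OF Y(1)] by blast
  have "(k, b) \<in> set D \<or> (k, b) \<in> set A"
    using b by auto
  then show ?thesis
  proof
    assume "(k, b) \<in> set D"
    then obtain B C where D: "D = B @ (k, b) # C"
      by (meson split_list)
    have "snd ` set (A @ (B @ [(k, b)]) @ Y @ C) \<subseteq> X"
      using carrier unfolding D by auto
    from reachable_block_right[OF Y this]
    have "reachable (A @ Y @ D) (A @ (B @ [(k, b)]) @ Y @ C)"
      unfolding D by simp
    also have "A @ (B @ [(k, b)]) @ Y @ C = A @ B @ (k, b) # e # Y' @ C"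
      using Ye by simp
    also have "reachable \<dots> (A @ B @ e # (k, op b y) # Y' @ C)"
      using reachable_sigma[of "A @ B" "(k, b)" e "Y' @ C"] Ye by simp
    finally show ?thesis
      unfolding D Ye by auto
  next
    assume "(k, b) \<in> set A"
    then obtain A1 B where A: "A = A1 @ (k, b) # B"
      by (meson split_list)
    have "reachable (A @ Y @ D) (A1 @ (k, b) # e # Y' @ B @ D)"
      using reachable_block_left[OF Y, of B "A1 @ [(k, b)]" D] carrier unfolding A Ye by auto
    also have "reachable \<dots> (A1 @ e # (k, op b y) # Y' @ B @ D)"
      using reachable_sigma[of A1 "(k, b)" e "Y' @ B @ D"] Ye by simp
    finally show ?thesis
      unfolding A Ye by auto
  qed
qed

lemma reachable_gather:
  "m \<le> count_list (map snd T) y \<Longrightarrow>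
   \<exists>Y R. reachable (P @ T) (P @ Y @ R) \<and> length Y = m \<and> (\<forall>e\<in>set Y. snd e = y)"
proof (induction T arbitrary: P m)
  case Nil
  then show ?case by (intro exI[of _ "[]"]) simp
next
  case (Cons c T)
  show ?case
  proof (cases "snd c = y")
    case True
    show ?thesis
    proof (cases m)
      case 0
      then show ?thesis
        by (intro exI[of _ "[]"] exI[of _ "c # T"]) simp
    next
      case (Suc m')
      then obtain Y R where "reachable ((P @ [c]) @ T) ((P @ [c]) @ Y @ R)" "length Y = m'" "\<forall>e\<in>set Y. snd e = y"
        using Cons.IH[of m' "P @ [c]"] Cons.prems True by auto
      then show ?thesis
        using Suc True by (intro exI[of _ "c # Y"] exI[of _ R]) simp
    qed
  next
    case False
    then obtain Y R where r: "reachable ((P @ [c]) @ T) ((P @ [c]) @ Y @ R)"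
      and Y: "length Y = m" "\<forall>e\<in>set Y. snd e = y"
      using Cons.IH[of m "P @ [c]"] Cons.prems by auto
    have "reachable (P @ c # T) (P @ (fst c, snd c) # Y @ R)"
      using r by simp
    also have "reachable \<dots> (P @ Y @ (fst c, rpow y (length Y) (snd c)) # R)"
      using reachable_pass_right[OF Y(2)] by blast
    finally show ?thesis
      using Y by blast
  qed
qed

lemma reachable_block_along_path:
  assumes "(x, x') \<in> (translation_rel S)\<^sup>*" "S \<subseteq> snd ` set (A @ D)" "snd ` set (A @ D) \<subseteq> X"
    and "is_block x Y" "x \<in> X"
  shows "\<exists>Y'. reachable (A @ Y @ D) (A @ Y' @ D) \<and> is_block x' Y' \<and> x' \<in> X"
  using assms(1)
proof (induction rule: rtrancl_induct)
  case base
  then show ?case using assms(4,5) by (intro exI[of _ Y]) simp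
next
  case (step x1 x2)
  then obtain Y1 where Y1: "reachable (A @ Y @ D) (A @ Y1 @ D)" "is_block x1 Y1" "x1 \<in> X"
    by blast
  obtain d where d: "d \<in> S" "x2 = op x1 d"
    using step.hyps(2) unfolding translation_rel_def by blast
  obtain j where j: "(j, d) \<in> set (A @ D)"
    using d(1) assms(2) by force
  have "d \<in> X"
    using d(1) assms(2,3) by blast
  have "snd ` set (A @ Y1 @ D) \<subseteq> X"
    using assms(3) is_block_in_carrier[OF Y1(2,3)] by auto
  then have "reachable (A @ Y1 @ D) (A @ rconj d Y1 @ D)"
    using reachable_block_conj[OF Y1(2,3) _ j] by blast
  then show ?case
    using Y1 d is_block_rconj op_closed[OF Y1(3) \<open>d \<in> X\<close>] reachable_trans by blast
qed

text \<open>Collect 2 period copies of some y in the component of t. Half of them is conjugated into a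
  block of t along a path of translations from y to t; the other half stays, so the entries
  outside the first half still provide every translation the path uses.\<close>

lemma reachable_make_block:
  assumes PR: "snd ` set (P @ R) \<subseteq> X" "generates (snd ` set (P @ R))"
    and t: "t \<in> X" and many: "2 * period * card X \<le> count_in (comp_rel `` {t}) R"
  shows "\<exists>B R'. reachable (P @ R) (P @ B @ R') \<and> length B = 2 * period \<and> has_block t B"
proof -
  define Ct where "Ct = comp_rel `` {t}"
  have Ct: "Ct \<subseteq> X" "t \<in> Ct"
    using qcomponent_subset[OF comp_rel_Image_in_qcomponents[OF t]] unfolding Ct_def comp_rel_def by auto
  then have "finite Ct" "card Ct \<le> card X"
    using finite_carrier by (auto intro: finite_subset card_mono)
  then have "card Ct * (2 * period) \<le> 2 * period * card X"
    by simp
  also have "\<dots> \<le> length (filter (\<lambda>x. x \<in> Ct) (map snd R))"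
    using many unfolding count_in_def Ct_def .
  finally have "card Ct * (2 * period) \<le> length (filter (\<lambda>x. x \<in> Ct) (map snd R))" .
  then obtain y where y: "y \<in> Ct" "2 * period \<le> count_list (map snd R) y"
    using pigeonhole_count_list[OF \<open>finite Ct\<close>] Ct(2) by blast
  obtain Y R1 where gather: "reachable (P @ R) (P @ Y @ R1)" "length Y = 2 * period" "\<forall>e\<in>set Y. snd e = y"
    using reachable_gather[OF y(2)] by blast
  define Y1 Y2 where "Y1 = take period Y" and "Y2 = drop period Y"
  have Y: "Y = Y1 @ Y2" and blocks: "is_block y Y1" "is_block y Y2"
    using gather(2,3) unfolding Y1_def Y2_def is_block_def by (auto dest: in_set_takeD in_set_dropD)
  have "y \<in> X"
    using y(1) Ct(1) by blast
  define S where "S = snd ` set (P @ Y @ R1)"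
  have S: "S \<subseteq> X" "generates S"
    using reachable_in_carrier[OF gather(1) PR(1)] reachable_generates[OF gather(1) PR] unfolding S_def by auto
  have "(y, t) \<in> comp_rel"
    using y(1) equiv_comp_rel unfolding Ct_def by (auto elim: equivE symE)
  then have path: "(y, t) \<in> (translation_rel S)\<^sup>*"
    using comp_rel_subset_translation_rel[OF S] by blast
  have "y \<in> snd ` set Y2"
    using is_block_nonempty[OF blocks(2)] by force
  then have "S \<subseteq> snd ` set (P @ (Y2 @ R1))"
    using blocks(1) unfolding S_def Y is_block_def by auto
  moreover have "snd ` set (P @ (Y2 @ R1)) \<subseteq> X"
    using S(1) unfolding S_def Y by auto
  ultimately obtain Y1' where "reachable (P @ Y1 @ (Y2 @ R1)) (P @ Y1' @ (Y2 @ R1))" "is_block t Y1'"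
    using reachable_block_along_path[OF path _ _ blocks(1) \<open>y \<in> X\<close>] by blast
  moreover have "length (Y1' @ Y2) = 2 * period"
    using \<open>is_block t Y1'\<close> blocks(2) unfolding is_block_def by simp
  moreover have "has_block t (Y1' @ Y2)"
    using \<open>is_block t Y1'\<close> unfolding has_block_def by (metis append_Nil)
  ultimately show ?thesis
    using reachable_trans[OF gather(1)] unfolding Y by (intro exI[of _ "Y1' @ Y2"] exI[of _ R1]) auto
qed

definition block_complete :: "(nat \<times> 'a) list \<Rightarrow> bool" where
  "block_complete T \<longleftrightarrow> (\<forall>y\<in>X. has_block y T)"

lemma reachable_count_in_suffix:
  assumes "reachable (P @ R) (P @ B @ R')" "snd ` set (P @ R) \<subseteq> X" "C \<in> qcomponents X op"
  shows "count_in C R \<le> count_in C R' + length B"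
  using reachable_count_in[OF assms] count_in_le_length[of C B] by simp

lemma reachable_blocks_for:
  assumes "snd ` set (P @ R) \<subseteq> X" "generates (snd ` set (P @ R))" "set ts \<subseteq> X"
    and "\<forall>C\<in>qcomponents X op. 2 * period * (length ts + card X) \<le> count_in C R"
  shows "\<exists>D R'. reachable (P @ R) (P @ D @ R') \<and> (\<forall>t\<in>set ts. has_block t D)"
  using assms
proof (induction ts arbitrary: P R)
  case Nil
  then show ?case by (intro exI[of _ "[]"] exI[of _ R]) simp
next
  case (Cons t ts)
  have t: "t \<in> X"
    using Cons.prems(3) by simp
  have "2 * period * card X \<le> 2 * period * (length (t # ts) + card X)"
    by (intro mult_le_mono2) simp
  also have "\<dots> \<le> count_in (comp_rel `` {t}) R"
    using Cons.prems(4) comp_rel_Image_in_qcomponents[OF t] by blast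
  finally obtain B R1 where B: "reachable (P @ R) (P @ B @ R1)" "length B = 2 * period" "has_block t B"
    using reachable_make_block[OF Cons.prems(1,2) t] by blast
  have PBR: "snd ` set ((P @ B) @ R1) \<subseteq> X" "generates (snd ` set ((P @ B) @ R1))"
    using reachable_in_carrier[OF B(1) Cons.prems(1)] reachable_generates[OF B(1) Cons.prems(1,2)] by simp_all
  have "2 * period * (length ts + card X) \<le> count_in C R1" if C: "C \<in> qcomponents X op" for C
  proof -
    have "2 * period * (length ts + card X) + 2 * period \<le> count_in C R"
      using Cons.prems(4) C by (simp add: algebra_simps)
    then show ?thesis
      using reachable_count_in_suffix[OF B(1) Cons.prems(1) C] B(2) by simp
  qed
  then obtain D R' where D: "reachable ((P @ B) @ R1) ((P @ B) @ D @ R')" "\<forall>t\<in>set ts. has_block t D"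
    using Cons.IH[OF PBR] Cons.prems(3) by auto
  have "reachable (P @ R) (P @ (B @ D) @ R')"
    using reachable_trans[OF B(1)] D(1) by simp
  moreover have "\<forall>t'\<in>set (t # ts). has_block t' (B @ D)"
    using B(3) D(2) has_block_append by auto
  ultimately show ?case by blast
qed

lemma reachable_block_complete:
  assumes "snd ` set T \<subseteq> X" "generates (snd ` set T)"
    and "\<forall>C\<in>qcomponents X op. 4 * period * card X \<le> count_in C T"
  shows "\<exists>T'. reachable T T' \<and> block_complete T'"
proof -
  obtain xs where xs: "set xs = X" "distinct xs"
    using finite_distinct_list[OF finite_carrier] by blast
  then have "2 * period * (length xs + card X) = 4 * period * card X"
    using distinct_card[OF xs(2)] by simp
  then have "\<forall>C\<in>qcomponents X op. 2 * period * (length xs + card X) \<le> count_in C T"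
    using assms(3) by presburger
  then have "\<exists>D R'. reachable ([] @ T) ([] @ D @ R') \<and> (\<forall>t\<in>set xs. has_block t D)"
    using assms(1,2) xs(1) by (intro reachable_blocks_for) simp_all
  then obtain D R' where "reachable T (D @ R')" "\<forall>t\<in>X. has_block t D"
    unfolding xs(1) by auto
  then show ?thesis
    unfolding block_complete_def using has_block_append by blast
qed

lemma block_complete_occurs: "block_complete T \<Longrightarrow> y \<in> X \<Longrightarrow> \<exists>k. (k, y) \<in> set T"
  unfolding block_complete_def has_block_def using is_block_nonempty by fastforce

section \<open>The image of the stabilizer\<close>

lemma posin_preserved_iff:
  assumes "p permutes {0..<length s}" "set s \<subseteq> X"
  shows "(\<forall>C\<in>qcomponents X op. p ` posin s C = posin s C) \<longleftrightarrow> (\<forall>k<length s. (s ! k, s ! p k) \<in> comp_rel)"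
proof
  assume preserved: "\<forall>C\<in>qcomponents X op. p ` posin s C = posin s C"
  show "\<forall>k<length s. (s ! k, s ! p k) \<in> comp_rel"
  proof (intro allI impI)
    fix k assume k: "k < length s"
    then have "s ! k \<in> X"
      using assms(2) by auto
    then have "k \<in> posin s (comp_rel `` {s ! k})" "comp_rel `` {s ! k} \<in> qcomponents X op"
      using k comp_rel_Image_in_qcomponents unfolding posin_def by auto
    then show "(s ! k, s ! p k) \<in> comp_rel"
      using preserved unfolding posin_def by blast
  qed
next
  assume related: "\<forall>k<length s. (s ! k, s ! p k) \<in> comp_rel"
  show "\<forall>C\<in>qcomponents X op. p ` posin s C = posin s C"
  proof
    fix C assume "C \<in> qcomponents X op"
    then obtain c where C: "C = comp_rel `` {c}"
      by (rule qcomponentE)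
    have "p ` posin s C \<subseteq> posin s C"
    proof
      fix k' assume "k' \<in> p ` posin s C"
      then obtain k where k: "k < length s" "(c, s ! k) \<in> comp_rel" "k' = p k"
        unfolding posin_def C by auto
      then have "p k < length s"
        using permutes_in_image[OF assms(1)] by simp
      moreover have "(c, s ! p k) \<in> comp_rel"
        using k related comp_rel_trans by blast
      ultimately show "k' \<in> posin s C"
        unfolding posin_def C k(3) by simp
    qed
    moreover have "inj_on p (posin s C)"
      using permutes_inj[OF assms(1)] by (rule inj_on_subset) simp
    ultimately show "p ` posin s C = posin s C"
      by (intro endo_inj_surj) (auto simp: posin_def)
  qed
qed

lemma count_in_enumerate: "count_in C (enumerate 0 s) = card (posin s C)"
  unfolding count_in_def posin_def by (simp add: length_filter_conv_card)

end

locale generating_tuple = finite_quandle +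
  fixes s :: "'a list"
  assumes generates_tuple: "qgenerates X op s"
begin

abbreviation start :: "(nat \<times> 'a) list" where
  "start \<equiv> enumerate 0 s"

lemma snd_set_start: "snd ` set start = set s"
  by (metis list.set_map map_snd_enumerate)

lemma start_in_carrier: "snd ` set start \<subseteq> X"
  using generates_tuple unfolding qgenerates_def snd_set_start by blast

lemma start_generates: "generates (snd ` set start)"
  using generates_tuple unfolding qgenerates_def generates_def snd_set_start by blast

lemma reachable_start_comp_rel:
  assumes "reachable start T" "(k, x) \<in> set T"
  shows "(s ! k, x) \<in> comp_rel"
proof -
  have "\<forall>(k, x)\<in>set start. (s ! k, x) \<in> comp_rel \<and> x \<in> X"
    using start_in_carrier by (auto simp: in_set_enumerate_eq)
  then have "\<forall>(k, x)\<in>set T. (s ! k, x) \<in> comp_rel \<and> x \<in> X"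
  proof (rule reachable_entry_invariant[OF assms(1)])
    fix k x y assume "x \<in> X" "y \<in> X" "(s ! k, x) \<in> comp_rel"
    then show "(s ! k, op x y) \<in> comp_rel \<and> (s ! k, qrinv X op x y) \<in> comp_rel"
      using comp_rel_trans comp_rel_op comp_rel_qrinv by blast
  qed
  then show ?thesis
    using assms(2) by blast
qed

lemma reachable_start_labels:
  assumes "reachable start T"
  shows "distinct (map fst T)" "fst ` set T = {0..<length s}"
proof -
  have m: "mset (map fst T) = mset [0..<length s]"
    using reachable_mset_labels[OF assms] by simp
  show "distinct (map fst T)"
    using mset_eq_imp_distinct_iff[OF m] by simp
  show "fst ` set T = {0..<length s}"
    using mset_eq_setD[OF m] by simp
qed

lemma stab_image_if_reachable:
  assumes "reachable start T" "map snd T = s"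
  shows "(\<lambda>k. if k < length s then fst (T ! k) else k) \<in> stab_image X op s"
proof -
  obtain w where w: "valid_bword (length s) w" "lact start w = T"
    using assms(1) unfolding reachable_def by auto
  have "bword_perm w k = (if k < length s then fst (T ! k) else k)" for k
  proof (cases "k < length s")
    case True
    then show ?thesis
      using fst_lact_nth[of start w k] w bword_perm_less[OF w(1) True] by (simp add: nth_enumerate_eq)
  next
    case False
    then show ?thesis
      using bword_perm_permutes[OF w(1)] by (simp add: permutes_not_in)
  qed
  moreover have "bword_act X op s w = s"
    using map_snd_lact[of start w] w assms(2) by simp
  ultimately show ?thesis
    using w(1) unfolding stab_image_def by (intro CollectI exI[of _ w]) auto
qed

text \<open>Interchanging the two equal entries amounts to relabelling by (i j); the braid word leading
  from T back to start then leads from the relabelled T to the relabelled start, whose labels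
  record (i j).\<close>

lemma transpose_in_stab_image_if_equal_split:
  assumes T: "reachable start T" "T = A @ (i, x) # B @ (j, x) # C" and "i \<noteq> j"
  shows "transpose i j \<in> stab_image X op s"
proof -
  let ?relabel = "map (apfst (transpose i j))"
  have fixed: "?relabel L = L" if "i \<notin> fst ` set L" "j \<notin> fst ` set L" for L
  proof (rule map_idI)
    fix e assume "e \<in> set L"
    then have "fst e \<noteq> i" "fst e \<noteq> j"
      using that by force+
    then show "apfst (transpose i j) e = e"
      by (cases e) simp
  qed
  have "distinct (map fst A @ i # map fst B @ j # map fst C)"
    using reachable_start_labels(1)[OF T(1)] T(2) by simp
  then have "?relabel T = A @ (j, x) # B @ (i, x) # C"
    unfolding T(2) using fixed[of A] fixed[of B] fixed[of C] by simp
  then have "reachable T (?relabel T)"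
    using reachable_swap_equal reachable_in_carrier[OF T(1) start_in_carrier] T(2) by simp
  also have "reachable (?relabel T) (?relabel start)"
    using reachable_relabel[OF reachable_sym[OF T(1) start_in_carrier]] .
  finally have "reachable start (?relabel start)"
    using T(1) reachable_trans by blast
  moreover have "i < length s" "j < length s"
    using reachable_start_labels(2)[OF T(1)] T(2) by auto
  then have "(\<lambda>k. if k < length s then transpose i j k else k) = transpose i j"
    by (auto simp: fun_eq_iff transpose_def)
  ultimately show ?thesis
    using stab_image_if_reachable[of "?relabel start"] by (simp add: nth_enumerate_eq cong: if_cong)
qed

lemma transpose_in_stab_image_if_equal:
  assumes "reachable start T" "(i, x) \<in> set T" "(j, x) \<in> set T" "i \<noteq> j"
  shows "transpose i j \<in> stab_image X op s"
proof -
  obtain A R where T: "T = A @ (i, x) # R"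
    using assms(2) by (meson split_list)
  then have "(j, x) \<in> set A \<or> (j, x) \<in> set R"
    using assms(3,4) by auto
  then show ?thesis
  proof
    assume "(j, x) \<in> set A"
    then obtain A' B where "T = A' @ (j, x) # B @ (i, x) # R"
      using T by (metis split_list append.assoc append_Cons)
    then show ?thesis
      using transpose_in_stab_image_if_equal_split[OF assms(1)] assms(4) by (metis transpose_commute)
  next
    assume "(j, x) \<in> set R"
    then obtain B C where "T = A @ (i, x) # B @ (j, x) # C"
      using T by (metis split_list)
    then show ?thesis
      using transpose_in_stab_image_if_equal_split[OF assms(1)] assms(4) by blast
  qed
qed

definition swappable :: "nat \<Rightarrow> nat \<Rightarrow> bool" where
  "swappable i j \<longleftrightarrow> i = j \<or> transpose i j \<in> stab_image X op s"

lemma swappable_refl [simp]: "swappable i i"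
  unfolding swappable_def by simp

lemma swappable_trans: "swappable i j \<Longrightarrow> swappable j l \<Longrightarrow> swappable i l"
proof (cases "i = j \<or> j = l \<or> i = l")
  case False
  assume "swappable i j" "swappable j l"
  then have "transpose i j \<circ> transpose j l \<circ> transpose i j \<in> stab_image X op s"
    using False stab_image_comp unfolding swappable_def by blast
  then show ?thesis
    using False transpose_comp_triple[of i l j] unfolding swappable_def by simp
qed auto

lemma swappable_if_equal: "reachable start T \<Longrightarrow> (i, x) \<in> set T \<Longrightarrow> (j, x) \<in> set T \<Longrightarrow> swappable i j"
  using transpose_in_stab_image_if_equal unfolding swappable_def by blast

text \<open>If op b y \<noteq> b, the block of y does not contain (k, b), and moving it across (k, b) changes
  only that entry, into (k, op b y); the copy of op b y at some other label k' survives.\<close>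

lemma swappable_translate:
  assumes T: "reachable start T" "block_complete T" and kb: "(k, b) \<in> set T" and y: "y \<in> X"
  shows "\<exists>k'. (k', op b y) \<in> set T \<and> swappable k k'"
proof -
  have TX: "snd ` set T \<subseteq> X"
    using reachable_in_carrier[OF T(1) start_in_carrier] .
  have "b \<in> X"
    using kb TX by force
  obtain A Y D where AYD: "T = A @ Y @ D" "is_block y Y"
    using T(2) y unfolding block_complete_def has_block_def by blast
  show ?thesis
  proof (cases "op b y = b")
    case True
    then show ?thesis using kb by auto
  next
    case False
    then have "(k, b) \<notin> set Y"
      using AYD(2) op_idem[OF y] unfolding is_block_def by auto
    then have "(k, b) \<in> set (A @ D)"
      using kb AYD(1) by auto
    then obtain T' where T': "reachable T T'" "(k, op b y) \<in> set T'" "set T - {(k, b)} \<subseteq> set T'"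
      using reachable_translate_entry[OF AYD(2) y, of A D] TX unfolding AYD(1) by blast
    obtain k' where k': "(k', op b y) \<in> set T"
      using block_complete_occurs[OF T(2) op_closed[OF \<open>b \<in> X\<close> y]] by blast
    then have "(k', op b y) \<in> set T'"
      using T'(3) False by auto
    then have "swappable k k'"
      using swappable_if_equal[OF reachable_trans[OF T(1) T'(1)] T'(2)] by blast
    then show ?thesis
      using k' by blast
  qed
qed

lemma swappable_along_translations:
  assumes T: "reachable start T" "block_complete T"
    and "(b, b') \<in> (translation_rel X)\<^sup>*" "(k, b) \<in> set T"
  shows "\<exists>k'. (k', b') \<in> set T \<and> swappable k k'"
  using assms(3,4)
proof (induction rule: rtrancl_induct)
  case (step b1 b2)
  then obtain k1 where k1: "(k1, b1) \<in> set T" "swappable k k1"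
    by blast
  obtain d where d: "d \<in> X" "b2 = op b1 d"
    using step.hyps(2) unfolding translation_rel_def by blast
  then obtain k2 where "(k2, b2) \<in> set T" "swappable k1 k2"
    using swappable_translate[OF T k1(1) d(1)] by blast
  then show ?case
    using swappable_trans[OF k1(2)] by blast
qed auto

lemma transpose_in_stab_image:
  assumes many: "\<forall>C\<in>qcomponents X op. 4 * period * card X \<le> count_in C start"
    and ij: "i < length s" "j < length s" "(s ! i, s ! j) \<in> comp_rel" "i \<noteq> j"
  shows "transpose i j \<in> stab_image X op s"
proof -
  obtain T where T: "reachable start T" "block_complete T"
    using reachable_block_complete[OF start_in_carrier start_generates many] by blast
  have "i \<in> fst ` set T" "j \<in> fst ` set T"
    using reachable_start_labels(2)[OF T(1)] ij(1,2) by auto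
  then obtain xi xj where x: "(i, xi) \<in> set T" "(j, xj) \<in> set T"
    by force
  have "(xi, s ! i) \<in> comp_rel" "(s ! j, xj) \<in> comp_rel"
    using reachable_start_comp_rel[OF T(1)] x comp_rel_sym by blast+
  then have "(xi, xj) \<in> comp_rel"
    using ij(3) comp_rel_trans by blast
  moreover have "generates X"
    unfolding generates_def by blast
  ultimately have "(xi, xj) \<in> (translation_rel X)\<^sup>*"
    using comp_rel_subset_translation_rel by blast
  then obtain k' where "(k', xj) \<in> set T" "swappable i k'"
    using swappable_along_translations[OF T _ x(1)] by blast
  then have "swappable i j"
    using swappable_if_equal[OF T(1) _ x(2)] swappable_trans by blast
  then show ?thesis
    using ij(4) unfolding swappable_def by simp
qed

lemma stab_image_comp_rel:
  assumes "p \<in> stab_image X op s" "k < length s"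
  shows "(s ! k, s ! p k) \<in> comp_rel"
proof -
  obtain w where w: "p = bword_perm w" "valid_bword (length s) w" "bword_act X op s w = s"
    using assms(1) unfolding stab_image_def by blast
  define T where "T = lact start w"
  have T: "reachable start T"
    unfolding reachable_def T_def using w(2) by auto
  have "snd (T ! k) = s ! k"
    using map_snd_lact[of start w] w(2,3) assms(2) nth_map[of k T snd] unfolding T_def by simp
  moreover have "fst (T ! k) = p k"
    using fst_lact_nth[of start w k] w(1,2) assms(2) bword_perm_less[OF w(2) assms(2)]
    unfolding T_def by (simp add: nth_enumerate_eq)
  moreover have "T ! k \<in> set T"
    using assms(2) unfolding T_def by simp
  ultimately have "(p k, s ! k) \<in> set T"
    by (metis prod.collapse)
  then show ?thesis
    using reachable_start_comp_rel[OF T] comp_rel_sym by blast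
qed

lemma stab_image_eq:
  assumes "\<forall>C\<in>qcomponents X op. 4 * period * card X \<le> count_in C start"
  shows "stab_image X op s = {p. p permutes {0..<length s} \<and> (\<forall>k<length s. (s ! k, s ! p k) \<in> comp_rel)}"
proof (intro equalityI subsetI CollectI conjI allI impI; (elim CollectE conjE)?)
  fix p assume p: "p \<in> stab_image X op s"
  then show "p permutes {0..<length s}"
    unfolding stab_image_def using bword_perm_permutes by blast
  show "(s ! k, s ! p k) \<in> comp_rel" if "k < length s" for k
    using stab_image_comp_rel[OF p that] .
next
  fix p assume p: "p permutes {0..<length s}" and related: "\<forall>k<length s. (s ! k, s ! p k) \<in> comp_rel"
  let ?c = "\<lambda>k. comp_rel `` {s ! k}"
  have same_class: "\<forall>k\<in>{0..<length s}. ?c (p k) = ?c k"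
    using related by (simp add: comp_rel_iff_Image_eq)
  have transp: "transpose i j \<in> stab_image X op s"
    if "i \<in> {0..<length s}" "j \<in> {0..<length s}" "i \<noteq> j" "?c i = ?c j" for i j
    using that transpose_in_stab_image[OF assms] by (simp add: comp_rel_iff_Image_eq)
  show "p \<in> stab_image X op s"
    by (rule permutes_in_transposition_closure[OF finite_atLeastLessThan p same_class
          id_in_stab_image stab_image_comp transp])
qed

end

theorem corollary4p37:
  fixes X :: "'a set" and op :: "'a \<Rightarrow> 'a \<Rightarrow> 'a"
  assumes "finite X" and "quandle X op"
  shows "\<exists>N::nat. \<forall>s :: 'a list.
           qgenerates X op s \<and> (\<forall>C\<in>qcomponents X op. card (posin s C) \<ge> N)
           \<longrightarrow> stab_image X op s =
               {p. p permutes {0..<length s} \<and> (\<forall>C\<in>qcomponents X op. p ` posin s C = posin s C)}"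
proof -
  interpret finite_quandle X op
    using assms by unfold_locales
  have "stab_image X op s =
          {p. p permutes {0..<length s} \<and> (\<forall>C\<in>qcomponents X op. p ` posin s C = posin s C)}"
    if gen: "qgenerates X op s" and many: "\<forall>C\<in>qcomponents X op. 4 * period * card X \<le> card (posin s C)" for s
  proof -
    interpret generating_tuple X op s
      using gen by unfold_locales
    have "set s \<subseteq> X"
      using gen unfolding qgenerates_def by blast
    have "stab_image X op s = {p. p permutes {0..<length s} \<and> (\<forall>k<length s. (s ! k, s ! p k) \<in> comp_rel)}"
      using many by (intro stab_image_eq) (simp add: count_in_enumerate)
    also have "\<dots> = {p. p permutes {0..<length s} \<and> (\<forall>C\<in>qcomponents X op. p ` posin s C = posin s C)}"
      using \<open>set s \<subseteq> X\<close> by (intro Collect_cong conj_cong refl) (simp add: posin_preserved_iff)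
    finally show ?thesis .
  qed
  then show ?thesis by blast
qed

end
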